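(* Let $x\in\mathbb{R}^{2d}$ be in the exterior of $\overline M$. Then $\overline n_+(x)=n_+(x)-n_-(x)=-\overline n_-(x)$, and in particular $\overline R(n_+(x)-n_-(x))\sim x$ and $\overline R(n_-(x)-n_+(x))\sim -x$.
   Context: Work in $\mathbb{R}^{2d}$ with its standard inner product, symplectic form $\omega$ and complex structure $J$. Let $M\subset\mathbb{R}^{2d}$ be a smooth closed quadratically convex hypersurface with the origin inside. For $x\in M$, $R(x)$ is the unique vector with $\omega(v,R(x))=0$ for all $v\in T_xM$ and $\omega(x,R(x))=1$. Write $a\sim b$ if $a,b$ are proportional with a positive coefficient. For $x$ in the exterior of $M$, $n_-(x),n_+(x)\in M$ are the unique points with $R(n_-(x))\sim -x$ and $R(n_+(x))\sim x$; equivalently $n_+(x)=G^{-1}(-Jx/|x|)$ and $n_-(x)=G^{-1}(Jx/|x|)$, where $G:M\to S^{2d-1}$ is the outward normal Gauss map. The symmetrization $\overline M$ of $M$ is the centrally symmetric hypersurface with support function $\bar p(v)=p(v)+p(-v)$ ($p$ the support function of $M$), i.e. the Minkowski sum of $M$ and $-M$; its Gauss map $\overline G$ satisfies $\overline G^{-1}(v)=G^{-1}(v)-G^{-1}(-v)$. The quantities $\overline R$, $\overline n_\pm$ are defined for $\overline M$ exactly as $R$, $n_\pm$ are for $M$. *)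

theory Defs
  imports "HOL-Analysis.Analysis"
begin

text \<open>Ambient space R^{2d} = R^d x R^d, points (q,p).\<close>
type_synonym 'd phase = "(real^'d) \<times> (real^'d)"

text \<open>Standard complex structure J(q,p) = (-p,q) and symplectic form omega(u,v) = <Ju,v>
  (= sum dq_i /\ dp_i).\<close>
definition Jmap :: "'d::finite phase \<Rightarrow> 'd phase" where
  "Jmap u = (- snd u, fst u)"

definition omega :: "'d::finite phase \<Rightarrow> 'd phase \<Rightarrow> real" where
  "omega u v = Jmap u \<bullet> v"

definition pos_prop :: "'a::real_vector \<Rightarrow> 'a \<Rightarrow> bool" where
  "pos_prop a b \<longleftrightarrow> (\<exists>c>0. a = c *\<^sub>R b)"

coinductive smooth_fun :: "('a::real_normed_vector \<Rightarrow> real) \<Rightarrow> bool" where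
  "(\<forall>x. F differentiable (at x)) \<Longrightarrow>
   (\<forall>v. smooth_fun (\<lambda>x. frechet_derivative F (at x) v)) \<Longrightarrow> smooth_fun F"

definition D2 :: "('a::real_normed_vector \<Rightarrow> real) \<Rightarrow> 'a \<Rightarrow> 'a \<Rightarrow> 'a \<Rightarrow> real" where
  "D2 F x v w = frechet_derivative (\<lambda>y. frechet_derivative F (at y) v) (at x) w"

text \<open>K is the compact convex body with 0 in its interior bounded by a smooth closed
  quadratically convex hypersurface frontier K: there is a smooth defining function F with
  K = {F <= 0}, frontier K = {F = 0}, dF nonzero on frontier K, and the Hessian of F
  positive definite on the tangent spaces ker dF.\<close>
definition qconvex_body :: "'d::finite phase set \<Rightarrow> bool" where
  "qconvex_body K \<longleftrightarrow> compact K \<and> convex K \<and> 0 \<in> interior K \<and>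
     (\<exists>F. smooth_fun F \<and> K = {x. F x \<le> 0} \<and> frontier K = {x. F x = 0} \<and>
        (\<forall>x\<in>frontier K. frechet_derivative F (at x) \<noteq> (\<lambda>v. 0)) \<and>
        (\<forall>x\<in>frontier K. \<forall>v. v \<noteq> 0 \<and> frechet_derivative F (at x) v = 0 \<longrightarrow> D2 F x v v > 0))"

definition tangent_space :: "'a::real_normed_vector set \<Rightarrow> 'a \<Rightarrow> 'a set" where
  "tangent_space M x = {v. \<exists>\<gamma>. (\<forall>t. \<gamma> t \<in> M) \<and> \<gamma> 0 = x \<and> (\<gamma> has_vector_derivative v) (at 0)}"

definition Rvec :: "'d::finite phase set \<Rightarrow> 'd phase \<Rightarrow> 'd phase" where
  "Rvec M x = (THE r. (\<forall>v\<in>tangent_space M x. omega v r = 0) \<and> omega x r = 1)"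

definition n_plus :: "'d::finite phase set \<Rightarrow> 'd phase \<Rightarrow> 'd phase" where
  "n_plus M x = (THE y. y \<in> M \<and> pos_prop (Rvec M y) x)"

definition n_minus :: "'d::finite phase set \<Rightarrow> 'd phase \<Rightarrow> 'd phase" where
  "n_minus M x = (THE y. y \<in> M \<and> pos_prop (Rvec M y) (- x))"

text \<open>Symmetrization: the hypersurface bounding the Minkowski sum K + (-K).\<close>
definition sym_body :: "'a::real_vector set \<Rightarrow> 'a set" where
  "sym_body K = {a - b | a b. a \<in> K \<and> b \<in> K}"

end

theory Submission
  imports Defs
begin

text \<open>Up to a positive factor, \<open>R(y)\<close> is \<open>J\<close> applied to an outward normal of the
  hypersurface at \<open>y\<close>. Hence \<open>R(y) \<sim> x\<close> says that the outward normal at \<open>y\<close> is a positive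
  multiple of \<open>-Jx\<close>, i.e. that \<open>y\<close> maximises the linear functional \<open>\<langle>-Jx, \<cdot>\<rangle>\<close> on the body.
  For the strictly convex body \<open>K\<close> this maximiser is unique, so \<open>n\<^sub>+(x)\<close> and
  \<open>n\<^sub>-(x)\<close> maximise \<open>\<langle>-Jx, \<cdot>\<rangle>\<close> and \<open>\<langle>Jx, \<cdot>\<rangle>\<close> respectively; on \<open>K - K\<close> the functional
  \<open>\<langle>-Jx, \<cdot>\<rangle>\<close> is maximised exactly at \<open>n\<^sub>+(x) - n\<^sub>-(x)\<close>. The analytic input is that
  both frontiers are smooth: at every support point the tangent space is the whole supporting
  hyperplane. For \<open>K - K\<close> this follows because a line in the supporting hyperplane of \<open>K\<close>
  stays in \<open>K\<close> up to second order, and the same then holds for its translate in \<open>K - K\<close>.\<close>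

section \<open>Symplectic linear algebra\<close>

lemma Jmap_Jmap [simp]: "Jmap (Jmap u) = - u"
  by (simp add: Jmap_def prod_eq_iff)

lemma inner_Jmap_Jmap [simp]: "Jmap u \<bullet> Jmap v = u \<bullet> v"
  by (simp add: Jmap_def inner_prod_def)

lemma Jmap_scaleR [simp]: "Jmap (c *\<^sub>R u) = c *\<^sub>R Jmap u"
  by (simp add: Jmap_def)

lemma Jmap_minus [simp]: "Jmap (- u) = - Jmap u"
  by (simp add: Jmap_def)

lemma inner_Jmap_left: "Jmap u \<bullet> v = - (u \<bullet> Jmap v)"
  by (simp add: Jmap_def inner_prod_def inner_commute)

lemma Jmap_eq_0_iff [simp]: "Jmap u = 0 \<longleftrightarrow> u = 0"
  by (auto simp: Jmap_def prod_eq_iff)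

lemma pos_prop_scaleR_left:
  assumes "c > 0"
  shows "pos_prop (c *\<^sub>R a) b \<longleftrightarrow> pos_prop a b"
proof
  assume "pos_prop (c *\<^sub>R a) b"
  then obtain k where "k > 0" and eq: "c *\<^sub>R a = k *\<^sub>R b" by (auto simp: pos_prop_def)
  have "a = (1 / c) *\<^sub>R (c *\<^sub>R a)" using assms by simp
  also have "\<dots> = (k / c) *\<^sub>R b" by (simp add: eq)
  finally show "pos_prop a b"
    using \<open>k > 0\<close> assms unfolding pos_prop_def by (intro exI[of _ "k / c"]) auto
next
  assume "pos_prop a b"
  then obtain k where "k > 0" "a = k *\<^sub>R b" by (auto simp: pos_prop_def)
  then show "pos_prop (c *\<^sub>R a) b"
    using assms by (auto simp: pos_prop_def intro!: exI[of _ "c * k"])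
qed

lemma pos_prop_Jmap_iff: "pos_prop (Jmap a) b \<longleftrightarrow> pos_prop a (- Jmap b)"
proof -
  have "Jmap a = k *\<^sub>R b \<longleftrightarrow> a = k *\<^sub>R - Jmap b" for k
  proof
    assume "Jmap a = k *\<^sub>R b"
    then have "- Jmap (Jmap a) = - (k *\<^sub>R Jmap b)" by simp
    then show "a = k *\<^sub>R - Jmap b" by simp
  qed simp
  then show ?thesis by (simp add: pos_prop_def)
qed

lemma orthogonal_complement_parallel:
  fixes g l :: "'a::real_inner"
  assumes "g \<noteq> 0" and "\<And>w. g \<bullet> w = 0 \<Longrightarrow> l \<bullet> w = 0"
  shows "l = ((l \<bullet> g) / (g \<bullet> g)) *\<^sub>R g"
proof -
  define w where "w = l - ((l \<bullet> g) / (g \<bullet> g)) *\<^sub>R g"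
  have "g \<bullet> w = 0" using assms(1) by (simp add: w_def inner_diff_right inner_commute)
  moreover from this have "l \<bullet> w = 0" by (rule assms(2))
  ultimately have "w \<bullet> w = 0" by (simp add: w_def inner_diff_left inner_commute)
  then show ?thesis by (simp add: w_def)
qed

lemma Rvec_hyperplane:
  fixes l p :: "'d::finite phase"
  assumes T: "tangent_space S p = {w. l \<bullet> w = 0}" and lp: "l \<bullet> p > 0"
  shows "Rvec S p = (1 / (l \<bullet> p)) *\<^sub>R Jmap l"
  unfolding Rvec_def
proof (rule the_equality)
  show "(\<forall>v\<in>tangent_space S p. omega v ((1 / (l \<bullet> p)) *\<^sub>R Jmap l) = 0)
      \<and> omega p ((1 / (l \<bullet> p)) *\<^sub>R Jmap l) = 1"
    using lp by (simp add: T omega_def inner_commute)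
  fix r assume r: "(\<forall>v\<in>tangent_space S p. omega v r = 0) \<and> omega p r = 1"
  have "Jmap r \<bullet> w = 0" if "l \<bullet> w = 0" for w
  proof -
    have "r \<bullet> Jmap w = 0"
      using r that by (simp add: T omega_def inner_commute del: split_paired_All)
    then show ?thesis by (simp add: inner_Jmap_left)
  qed
  then have Jr: "Jmap r = ((Jmap r \<bullet> l) / (l \<bullet> l)) *\<^sub>R l"
    using lp by (intro orthogonal_complement_parallel) auto
  define c where "c = (Jmap r \<bullet> l) / (l \<bullet> l)"
  have "- r = c *\<^sub>R Jmap l"
    using arg_cong[OF Jr, of Jmap] by (simp add: c_def)
  then have r_eq: "r = - c *\<^sub>R Jmap l" by (metis minus_minus scaleR_minus_left)
  have "1 = - c * (l \<bullet> p)"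
    using r by (simp add: r_eq omega_def inner_commute)
  then have "c = - 1 / (l \<bullet> p)" using lp by (simp add: field_simps)
  then show "r = (1 / (l \<bullet> p)) *\<^sub>R Jmap l" by (simp add: r_eq)
qed

section \<open>Real calculus along curves\<close>

lemma has_field_derivative_0_if_little_o:
  fixes f :: "real \<Rightarrow> real"
  assumes "\<And>\<epsilon>. \<epsilon> > 0 \<Longrightarrow> eventually (\<lambda>t. \<bar>f t - f 0\<bar> \<le> \<epsilon> * \<bar>t\<bar>) (at 0)"
  shows "(f has_field_derivative 0) (at 0)"
  unfolding has_field_derivative_iff
proof (rule tendstoI)
  fix e :: real assume "e > 0"
  have "eventually (\<lambda>t. \<bar>f t - f 0\<bar> \<le> e / 2 * \<bar>t\<bar> \<and> t \<noteq> 0) (at 0)"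
    using assms[of "e / 2"] \<open>e > 0\<close> by (simp add: eventually_conj_iff eventually_at_filter)
  then show "eventually (\<lambda>t. dist ((f t - f 0) / (t - 0)) 0 < e) (at 0)"
  proof (rule eventually_mono)
    fix t :: real assume "\<bar>f t - f 0\<bar> \<le> e / 2 * \<bar>t\<bar> \<and> t \<noteq> 0"
    then have "\<bar>f t - f 0\<bar> / \<bar>t\<bar> \<le> e / 2" by (simp add: divide_le_eq)
    then have "\<bar>f t - f 0\<bar> / \<bar>t\<bar> < e" using \<open>e > 0\<close> by linarith
    then show "dist ((f t - f 0) / (t - 0)) 0 < e" by (simp add: dist_real_def abs_divide)
  qed
qed

lemma has_real_derivative_vanishing_on_unit_interval:
  fixes f :: "real \<Rightarrow> real"
  assumes "(f has_real_derivative D) (at s)" and "0 < s" "s < 1"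
    and "\<And>y. 0 < y \<Longrightarrow> y < 1 \<Longrightarrow> f y = 0"
  shows "D = 0"
proof (rule DERIV_local_const[OF assms(1)])
  show "0 < min s (1 - s)" using assms(2,3) by simp
  show "\<forall>y. \<bar>s - y\<bar> < min s (1 - s) \<longrightarrow> f s = f y"
    using assms(2-4) by (auto simp: abs_if split: if_splits)
qed

lemma has_field_derivative_along_curve:
  fixes F :: "'a::real_normed_vector \<Rightarrow> real"
  assumes "(\<gamma> has_vector_derivative v) (at t)" and "(F has_derivative L) (at (\<gamma> t))"
  shows "((\<lambda>s. F (\<gamma> s)) has_field_derivative L v) (at t)"
  using vector_derivative_diff_chain_within[OF assms(1) has_derivative_at_withinI[OF assms(2)]]
  by (simp add: has_real_derivative_iff_has_vector_derivative o_def)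

lemma has_vector_derivative_line: "((\<lambda>s. a + s *\<^sub>R v) has_vector_derivative v) (at t)"
  by (auto intro!: derivative_eq_intros)

lemma has_vector_derivative_shrunk_line:
  "((\<lambda>t. (1 / (1 + \<epsilon> * t)) *\<^sub>R (a + t *\<^sub>R w)) has_vector_derivative (w - \<epsilon> *\<^sub>R a)) (at 0)"
proof -
  have "((\<lambda>t::real. 1 / (1 + \<epsilon> * t)) has_real_derivative - \<epsilon>) (at 0)"
    by (rule derivative_eq_intros refl | simp)+
  then show ?thesis
    using has_vector_derivative_scaleR[OF _ has_vector_derivative_line] by fastforce
qed

lemma smooth_funD:
  assumes "smooth_fun F"
  shows "F differentiable (at x)" and "smooth_fun (\<lambda>x. frechet_derivative F (at x) v)"
  using assms by (auto elim: smooth_fun.cases)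

section \<open>Support points\<close>

definition support_point :: "'a::real_inner set \<Rightarrow> 'a \<Rightarrow> 'a \<Rightarrow> bool" where
  "support_point C u a \<longleftrightarrow> a \<in> C \<and> (\<forall>z\<in>C. u \<bullet> z \<le> u \<bullet> a)"

lemma support_point_scaleR:
  assumes "c > 0"
  shows "support_point C (c *\<^sub>R u) p \<longleftrightarrow> support_point C u p"
  using assms by (simp add: support_point_def)

lemma support_point_exists:
  fixes C :: "'a::euclidean_space set"
  assumes "compact C" and "C \<noteq> {}"
  obtains a where "support_point C u a"
proof -
  have "continuous_on C (\<lambda>z. u \<bullet> z)" by (intro continuous_intros)
  then show ?thesis
    using continuous_attains_sup[OF assms] that by (auto simp: support_point_def)
qed

lemma support_point_sym_body_iff:
  "support_point (sym_body C) u y \<longleftrightarrow>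
     (\<exists>a b. y = a - b \<and> support_point C u a \<and> support_point C (- u) b)"
proof
  assume y: "support_point (sym_body C) u y"
  then obtain a b where ab: "y = a - b" "a \<in> C" "b \<in> C"
    by (auto simp: support_point_def sym_body_def)
  have "u \<bullet> (z - b) \<le> u \<bullet> (a - b)" "u \<bullet> (a - z) \<le> u \<bullet> (a - b)" if "z \<in> C" for z
    using y ab that by (auto simp: support_point_def sym_body_def)
  then show "\<exists>a b. y = a - b \<and> support_point C u a \<and> support_point C (- u) b"
    using ab by (auto simp: support_point_def inner_diff_right)
next
  assume "\<exists>a b. y = a - b \<and> support_point C u a \<and> support_point C (- u) b"
  then show "support_point (sym_body C) u y"
    by (fastforce simp: support_point_def sym_body_def inner_diff_right intro: add_mono)
qed

lemma support_point_pos: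
  fixes C :: "'a::euclidean_space set"
  assumes "0 \<in> interior C" and "l \<noteq> 0" and "support_point C l p"
  shows "l \<bullet> p > 0"
proof -
  obtain e where "e > 0" "ball 0 e \<subseteq> C" using assms(1) mem_interior by blast
  define z where "z = (e / 2 / norm l) *\<^sub>R l"
  have "z \<in> C" using \<open>e > 0\<close> \<open>ball 0 e \<subseteq> C\<close> assms(2) by (auto simp: z_def)
  then have "l \<bullet> z \<le> l \<bullet> p" using assms(3) by (simp add: support_point_def)
  moreover have "l \<bullet> z = e / 2 * norm l"
    using assms(2) by (simp add: z_def power2_norm_eq_inner[symmetric] power2_eq_square)
  moreover have "e / 2 * norm l > 0" using \<open>e > 0\<close> assms(2) by simp
  ultimately show ?thesis by linarith
qed

lemma support_point_frontier:
  fixes C :: "'a::euclidean_space set"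
  assumes "l \<noteq> 0" and "support_point C l p"
  shows "p \<in> frontier C"
proof -
  have "p \<notin> interior C"
  proof
    assume "p \<in> interior C"
    then obtain e where "e > 0" "ball p e \<subseteq> C" using mem_interior by blast
    define z where "z = p + (e / 2 / norm l) *\<^sub>R l"
    have "z \<in> C" using \<open>e > 0\<close> \<open>ball p e \<subseteq> C\<close> assms(1) by (auto simp: z_def dist_norm)
    then have "l \<bullet> z \<le> l \<bullet> p" using assms(2) by (simp add: support_point_def)
    moreover have "l \<bullet> z = l \<bullet> p + e / 2 * norm l" using assms(1)
      by (simp add: z_def inner_add_right power2_norm_eq_inner[symmetric] power2_eq_square)
    moreover have "e / 2 * norm l > 0" using \<open>e > 0\<close> assms(1) by simp
    ultimately show False by linarith
  qed
  then show ?thesis using assms(2) closure_subset by (auto simp: frontier_def support_point_def)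
qed

lemma tangent_space_subset_kernel:
  fixes C :: "'a::euclidean_space set"
  assumes "closed C" and "support_point C l p" and "w \<in> tangent_space (frontier C) p"
  shows "l \<bullet> w = 0"
proof -
  obtain \<gamma> where \<gamma>: "\<forall>t. \<gamma> t \<in> frontier C" "\<gamma> 0 = p" "(\<gamma> has_vector_derivative w) (at 0)"
    using assms(3) unfolding tangent_space_def by blast
  have deriv: "((\<lambda>t. l \<bullet> \<gamma> t) has_real_derivative l \<bullet> w) (at 0)"
    using bounded_linear.has_vector_derivative[OF bounded_linear_inner_right \<gamma>(3)]
    by (simp add: has_real_derivative_iff_has_vector_derivative)
  have "l \<bullet> \<gamma> t \<le> l \<bullet> \<gamma> 0" for t
    using \<gamma>(1,2) assms(1,2) frontier_subset_closed by (auto simp: support_point_def)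
  then show ?thesis using DERIV_local_max[OF deriv, of 1] by simp
qed

section \<open>Convex bodies and their tangent spaces\<close>

text \<open>The Minkowski gauge of \<open>C\<close> along the line \<open>p + t w\<close> is at most \<open>1 + o(t)\<close>.\<close>
definition flat_along :: "'a::real_normed_vector set \<Rightarrow> 'a \<Rightarrow> 'a \<Rightarrow> bool" where
  "flat_along C p w \<longleftrightarrow>
     (\<forall>\<epsilon>>0. eventually (\<lambda>t. (1 / (1 + \<epsilon> * \<bar>t\<bar>)) *\<^sub>R (p + t *\<^sub>R w) \<in> C) (at 0))"

lemma one_minus_inverse_one_plus_le:
  fixes a :: real
  assumes "0 \<le> a"
  shows "1 - 1 / (1 + a) \<le> a"
proof -
  have "1 - 1 / (1 + a) = a / (1 + a)" using assms by (simp add: field_simps)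
  also have "\<dots> \<le> a / 1" using assms by (intro divide_left_mono) auto
  finally show ?thesis by simp
qed

locale convex_body =
  fixes C :: "'a::euclidean_space set"
  assumes body_compact: "compact C" and body_convex: "convex C"
    and zero_in_interior: "0 \<in> interior C"
begin

lemma body_closed: "closed C"
  using body_compact compact_imp_closed by blast

lemma frontier_subset_body: "frontier C \<subseteq> C"
  using body_closed frontier_subset_closed by blast

lemma zero_in_body: "0 \<in> C"
  using zero_in_interior interior_subset by blast

lemma nonzero_if_outside_frontier:
  assumes "x \<in> outside (frontier C)"
  shows "x \<noteq> 0"
proof -
  have "x \<notin> closure C"
    using assms outside_frontier_eq_complement_closure[OF
        compact_imp_bounded[OF body_compact] body_convex] by simp
  then show ?thesis using zero_in_body closure_subset by blast
qed

lemma scale_le_frontier_scale: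
  assumes "s *\<^sub>R z \<in> C" and "r *\<^sub>R z \<in> frontier C" and "0 \<le> r"
  shows "s \<le> r"
proof (rule ccontr)
  assume "\<not> s \<le> r"
  then have "s > 0" "r / s < 1" "0 \<le> r / s" using assms(3) by auto
  then have "s *\<^sub>R z - (1 - r / s) *\<^sub>R (s *\<^sub>R z - 0) \<in> interior C"
    by (intro mem_interior_convex_shrink[OF body_convex zero_in_interior assms(1)]) auto
  moreover have "s - (1 - r / s) * s = r" using \<open>s > 0\<close> by (simp add: algebra_simps)
  then have "s *\<^sub>R z - (1 - r / s) *\<^sub>R (s *\<^sub>R z - 0) = r *\<^sub>R z"
    by (metis diff_zero scaleR_diff_left scaleR_scaleR)
  ultimately show False using assms(2) by (simp add: frontier_def)
qed

lemma radial_projection_to_frontier: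
  assumes "\<And>t. \<gamma> t \<noteq> 0"
  obtains r where "\<And>t. 0 < r t \<and> r t *\<^sub>R \<gamma> t \<in> frontier C"
proof -
  have "\<exists>d. 0 < d \<and> d *\<^sub>R \<gamma> t \<in> frontier C" for t
    using ray_to_frontier[OF compact_imp_bounded[OF body_compact] zero_in_interior assms[of t]]
    by (metis add_0)
  then show ?thesis using that by metis
qed

lemma radial_scale_has_derivative_0:
  assumes flat: "flat_along C p w"
    and r: "\<And>t. 0 < r t \<and> r t *\<^sub>R (p + t *\<^sub>R w) \<in> frontier C"
    and r_le: "\<And>t. r t \<le> 1" and r0: "r 0 = 1"
  shows "(r has_field_derivative 0) (at 0)"
proof (rule has_field_derivative_0_if_little_o)
  fix \<epsilon> :: real assume "\<epsilon> > 0"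
  with flat have "eventually (\<lambda>t. (1 / (1 + \<epsilon> * \<bar>t\<bar>)) *\<^sub>R (p + t *\<^sub>R w) \<in> C) (at 0)"
    unfolding flat_along_def by blast
  then show "eventually (\<lambda>t. \<bar>r t - r 0\<bar> \<le> \<epsilon> * \<bar>t\<bar>) (at 0)"
  proof (rule eventually_mono)
    fix t assume "(1 / (1 + \<epsilon> * \<bar>t\<bar>)) *\<^sub>R (p + t *\<^sub>R w) \<in> C"
    then have "1 / (1 + \<epsilon> * \<bar>t\<bar>) \<le> r t"
      by (rule scale_le_frontier_scale) (use r[of t] in auto)
    moreover have "1 - 1 / (1 + \<epsilon> * \<bar>t\<bar>) \<le> \<epsilon> * \<bar>t\<bar>"
      using \<open>\<epsilon> > 0\<close> by (intro one_minus_inverse_one_plus_le) simp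
    ultimately show "\<bar>r t - r 0\<bar> \<le> \<epsilon> * \<bar>t\<bar>" using r_le[of t] r0 by linarith
  qed
qed

text \<open>Project the line \<open>p + t w\<close> radially onto the frontier: by flatness the projection
  factor is \<open>1 + o(t)\<close>, so the projected curve still has velocity \<open>w\<close> at \<open>p\<close>.\<close>
lemma tangent_space_if_flat_along:
  assumes l: "l \<noteq> 0" "support_point C l p" and lw: "l \<bullet> w = 0" and flat: "flat_along C p w"
  shows "w \<in> tangent_space (frontier C) p"
proof -
  have lp: "l \<bullet> p > 0" using support_point_pos[OF zero_in_interior l] .
  have l_line: "l \<bullet> (p + t *\<^sub>R w) = l \<bullet> p" for t
    using lw by (simp add: inner_add_right)
  then have "p + t *\<^sub>R w \<noteq> 0" for t
    using lp by (metis inner_zero_right less_irrefl)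
  then obtain r where r: "\<And>t. 0 < r t \<and> r t *\<^sub>R (p + t *\<^sub>R w) \<in> frontier C"
    using radial_projection_to_frontier[of "\<lambda>t. p + t *\<^sub>R w"] by blast
  have pF: "p \<in> frontier C" by (rule support_point_frontier[OF l])
  have "r 0 \<le> 1"
    by (rule scale_le_frontier_scale[of "r 0" p 1]) (use r[of 0] pF frontier_subset_body in auto)
  moreover have "1 \<le> r 0"
    by (rule scale_le_frontier_scale[of 1 p "r 0"]) (use r[of 0] pF frontier_subset_body in auto)
  ultimately have r0: "r 0 = 1" by simp
  have r_le: "r t \<le> 1" for t
  proof -
    have "r t *\<^sub>R (p + t *\<^sub>R w) \<in> C" using r[of t] frontier_subset_body by blast
    then have "l \<bullet> (r t *\<^sub>R (p + t *\<^sub>R w)) \<le> l \<bullet> p"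
      using l(2) unfolding support_point_def by blast
    then have "r t * (l \<bullet> p) \<le> 1 * (l \<bullet> p)" by (simp add: l_line)
    then show ?thesis using lp by (simp only: mult_le_cancel_right)
  qed
  have "(r has_field_derivative 0) (at 0)"
    by (rule radial_scale_has_derivative_0[OF flat r r_le r0])
  then have "((\<lambda>t. r t *\<^sub>R (p + t *\<^sub>R w)) has_vector_derivative w) (at 0)"
    using r0 by (auto intro!: derivative_eq_intros)
  then show ?thesis
    unfolding tangent_space_def using r r0
    by (intro CollectI exI[of _ "\<lambda>t. r t *\<^sub>R (p + t *\<^sub>R w)"]) auto
qed

lemma support_point_at_frontier:
  assumes "p \<in> frontier C"
  obtains l where "l \<noteq> 0" and "support_point C l p"
proof -
  have "rel_interior C = interior C"
    using zero_in_interior rel_interior_nonempty_interior by blast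
  then have "p \<notin> rel_interior C" "p \<in> closure C"
    using assms by (auto simp: frontier_def)
  then obtain a where "a \<noteq> 0" and a: "\<And>z. z \<in> closure C \<Longrightarrow> a \<bullet> p \<le> a \<bullet> z"
    using supporting_hyperplane_relative_frontier[OF body_convex] by metis
  have "support_point C (- a) p"
    using a assms frontier_subset_body closure_subset by (auto simp: support_point_def)
  then show ?thesis using \<open>a \<noteq> 0\<close> that[of "- a"] by simp
qed

lemma support_points_segment_frontier:
  assumes "u \<noteq> 0" and a: "support_point C u a" and b: "support_point C u b"
    and "0 \<le> s" "s \<le> 1"
  shows "a + s *\<^sub>R (b - a) \<in> frontier C"
proof -
  have "u \<bullet> a = u \<bullet> b" using a b by (force simp: support_point_def)
  have "(1 - s) *\<^sub>R a + s *\<^sub>R b \<in> C"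
    using a b assms(4,5) by (intro convexD[OF body_convex]) (auto simp: support_point_def)
  moreover have "(1 - s) *\<^sub>R a + s *\<^sub>R b = a + s *\<^sub>R (b - a)" by (simp add: algebra_simps)
  moreover have "u \<bullet> (a + s *\<^sub>R (b - a)) = u \<bullet> a"
    using \<open>u \<bullet> a = u \<bullet> b\<close> by (simp add: inner_add_right inner_diff_right)
  ultimately have "support_point C u (a + s *\<^sub>R (b - a))"
    using a by (simp add: support_point_def)
  then show ?thesis by (rule support_point_frontier[OF \<open>u \<noteq> 0\<close>])
qed

lemma convex_body_sym_body: "convex_body (sym_body C)"
proof
  show "compact (sym_body C)"
    unfolding sym_body_def by (rule compact_differences[OF body_compact body_compact])
  have "sym_body C = (\<Union>a\<in>C. \<Union>b\<in>C. {a - b})"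
    unfolding sym_body_def by blast
  then show "convex (sym_body C)"
    using convex_differences[OF body_convex body_convex] by simp
  have "C \<subseteq> sym_body C"
    unfolding sym_body_def using zero_in_body by force
  then show "0 \<in> interior (sym_body C)"
    using zero_in_interior interior_mono by blast
qed

lemma flat_along_sym_body:
  assumes "flat_along C a w" and "b \<in> C"
  shows "flat_along (sym_body C) (a - b) w"
  unfolding flat_along_def
proof (intro allI impI)
  fix \<epsilon> :: real assume "\<epsilon> > 0"
  with assms(1) have "eventually (\<lambda>t. (1 / (1 + \<epsilon> * \<bar>t\<bar>)) *\<^sub>R (a + t *\<^sub>R w) \<in> C) (at 0)"
    unfolding flat_along_def by blast
  then show "eventually (\<lambda>t. (1 / (1 + \<epsilon> * \<bar>t\<bar>)) *\<^sub>R (a - b + t *\<^sub>R w) \<in> sym_body C) (at 0)"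
  proof (rule eventually_mono)
    fix t assume a_t: "(1 / (1 + \<epsilon> * \<bar>t\<bar>)) *\<^sub>R (a + t *\<^sub>R w) \<in> C"
    define s where "s = 1 / (1 + \<epsilon> * \<bar>t\<bar>)"
    have "1 \<le> 1 + \<epsilon> * \<bar>t\<bar>" using \<open>\<epsilon> > 0\<close> by simp
    then have "0 \<le> s" "s \<le> 1" by (auto simp: s_def)
    then have "s *\<^sub>R b + (1 - s) *\<^sub>R 0 \<in> C"
      using assms(2) zero_in_body by (intro convexD[OF body_convex]) auto
    moreover have "s *\<^sub>R (a - b + t *\<^sub>R w) = s *\<^sub>R (a + t *\<^sub>R w) - s *\<^sub>R b"
      by (simp add: algebra_simps)
    ultimately show "s *\<^sub>R (a - b + t *\<^sub>R w) \<in> sym_body C"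
      using a_t unfolding s_def sym_body_def by force
  qed
qed

end

section \<open>Smooth convex bodies\<close>

locale smooth_convex_body = convex_body +
  assumes flat_along_supporting_hyperplane:
    "l \<noteq> 0 \<Longrightarrow> support_point C l p \<Longrightarrow> l \<bullet> w = 0 \<Longrightarrow> flat_along C p w"
begin

lemma tangent_space_eq_kernel:
  assumes "l \<noteq> 0" and "support_point C l p"
  shows "tangent_space (frontier C) p = {w. l \<bullet> w = 0}"
  using tangent_space_subset_kernel[OF body_closed assms(2)]
    tangent_space_if_flat_along[OF assms] flat_along_supporting_hyperplane[OF assms]
  by blast

lemma smooth_convex_body_sym_body: "smooth_convex_body (sym_body C)"
proof -
  interpret sym: convex_body "sym_body C" by (rule convex_body_sym_body)
  show ?thesis
  proof
    fix l y w assume "l \<noteq> 0" "support_point (sym_body C) l y" "l \<bullet> w = 0"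
    then obtain a b where "y = a - b" "support_point C l a" "support_point C (- l) b"
      by (auto simp: support_point_sym_body_iff)
    then show "flat_along (sym_body C) y w"
      using \<open>l \<noteq> 0\<close> \<open>l \<bullet> w = 0\<close> flat_along_supporting_hyperplane flat_along_sym_body
      by (auto simp: support_point_def)
  qed
qed

end

lemma Rvec_smooth_convex_body:
  fixes C :: "'d::finite phase set"
  assumes "smooth_convex_body C" and "l \<noteq> 0" and "support_point C l p"
  shows "Rvec (frontier C) p = (1 / (l \<bullet> p)) *\<^sub>R Jmap l"
proof -
  interpret smooth_convex_body C by (rule assms(1))
  show ?thesis
    using Rvec_hyperplane tangent_space_eq_kernel[OF assms(2,3)]
      support_point_pos[OF zero_in_interior assms(2,3)] by blast
qed

lemma Rvec_pos_prop_iff_support_point: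
  fixes C :: "'d::finite phase set"
  assumes "smooth_convex_body C" and "x \<noteq> 0" and "p \<in> frontier C"
  shows "pos_prop (Rvec (frontier C) p) x \<longleftrightarrow> support_point C (- Jmap x) p"
proof -
  interpret smooth_convex_body C by (rule assms(1))
  obtain l where l: "l \<noteq> 0" "support_point C l p"
    using support_point_at_frontier[OF assms(3)] .
  show ?thesis
  proof
    assume "pos_prop (Rvec (frontier C) p) x"
    moreover have "l \<bullet> p > 0" by (rule support_point_pos[OF zero_in_interior l])
    ultimately have "pos_prop l (- Jmap x)"
      by (simp add: Rvec_smooth_convex_body[OF assms(1) l] pos_prop_scaleR_left pos_prop_Jmap_iff)
    then obtain k where "k > 0" "l = k *\<^sub>R - Jmap x" by (auto simp: pos_prop_def)
    then show "support_point C (- Jmap x) p"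
      using l(2) support_point_scaleR[OF \<open>k > 0\<close>, of C "- Jmap x"] by simp
  next
    assume p: "support_point C (- Jmap x) p"
    moreover have "- Jmap x \<noteq> 0" using assms(2) by simp
    ultimately have "Rvec (frontier C) p = (1 / (- Jmap x \<bullet> p)) *\<^sub>R x"
      and "- Jmap x \<bullet> p > 0"
      using Rvec_smooth_convex_body[OF assms(1), of "- Jmap x" p]
        support_point_pos[OF zero_in_interior, of "- Jmap x" p] by simp_all
    then show "pos_prop (Rvec (frontier C) p) x"
      unfolding pos_prop_def by (metis zero_less_divide_1_iff)
  qed
qed

lemma n_plus_smooth_convex_body:
  fixes C :: "'d::finite phase set"
  assumes "smooth_convex_body C" and "x \<noteq> 0" and a: "support_point C (- Jmap x) a"
    and unique: "\<And>b. support_point C (- Jmap x) b \<Longrightarrow> b = a"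
  shows "n_plus (frontier C) x = a" and "pos_prop (Rvec (frontier C) a) x"
proof -
  have aF: "a \<in> frontier C" using support_point_frontier[OF _ a] assms(2) by simp
  show pos: "pos_prop (Rvec (frontier C) a) x"
    using Rvec_pos_prop_iff_support_point[OF assms(1,2) aF] a by simp
  show "n_plus (frontier C) x = a"
    unfolding n_plus_def
  proof (rule the_equality)
    show "a \<in> frontier C \<and> pos_prop (Rvec (frontier C) a) x" using aF pos by blast
    fix y assume "y \<in> frontier C \<and> pos_prop (Rvec (frontier C) y) x"
    then show "y = a" using unique Rvec_pos_prop_iff_support_point[OF assms(1,2)] by blast
  qed
qed

section \<open>Quadratically convex bodies\<close>

locale qconvex_defining_function = convex_body K for K :: "'a::euclidean_space set" +
  fixes F :: "'a \<Rightarrow> real"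
  assumes smooth: "smooth_fun F" and body_eq: "K = {x. F x \<le> 0}"
    and frontier_eq: "frontier K = {x. F x = 0}"
    and derivative_nonzero: "x \<in> frontier K \<Longrightarrow> frechet_derivative F (at x) \<noteq> (\<lambda>v. 0)"
    and hessian_pos:
      "x \<in> frontier K \<Longrightarrow> v \<noteq> 0 \<Longrightarrow> frechet_derivative F (at x) v = 0 \<Longrightarrow> D2 F x v v > 0"
begin

definition grad :: "'a \<Rightarrow> 'a" where
  "grad x = adjoint (frechet_derivative F (at x)) (1::real)"

lemma F_has_frechet_derivative: "(F has_derivative frechet_derivative F (at x)) (at x)"
  using smooth_funD(1)[OF smooth] frechet_derivative_works by blast

lemma frechet_derivative_eq_grad: "frechet_derivative F (at x) = (\<lambda>v. grad x \<bullet> v)"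
proof
  fix v
  show "frechet_derivative F (at x) v = grad x \<bullet> v"
    using adjoint_works[OF has_derivative_linear[OF F_has_frechet_derivative], where x = v and y = 1]
    by (simp add: grad_def inner_commute)
qed

lemma F_has_derivative: "(F has_derivative (\<lambda>v. grad x \<bullet> v)) (at x)"
  using F_has_frechet_derivative by (simp add: frechet_derivative_eq_grad)

lemma grad_nonzero: "x \<in> frontier K \<Longrightarrow> grad x \<noteq> 0"
  using derivative_nonzero by (auto simp: frechet_derivative_eq_grad fun_eq_iff)

lemma support_point_grad:
  assumes a: "a \<in> frontier K"
  shows "support_point K (grad a) a"
  unfolding support_point_def
proof (intro conjI ballI)
  show "a \<in> K" using a frontier_subset_body by blast
  fix z assume "z \<in> K"
  show "grad a \<bullet> z \<le> grad a \<bullet> a"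
  proof (rule ccontr)
    assume "\<not> ?thesis"
    then have "grad a \<bullet> (z - a) > 0" by (simp add: inner_diff_right)
    moreover have "((\<lambda>s. F (a + s *\<^sub>R (z - a))) has_real_derivative grad a \<bullet> (z - a)) (at 0)"
      using has_field_derivative_along_curve[OF has_vector_derivative_line[of a "z - a" 0]]
        F_has_derivative by simp
    ultimately have "\<exists>d>0. \<forall>h>0. h < d \<longrightarrow> F a < F (a + h *\<^sub>R (z - a))"
      using DERIV_pos_inc_right by force
    then obtain d where "d > 0" and d: "\<And>h. 0 < h \<Longrightarrow> h < d \<Longrightarrow> F a < F (a + h *\<^sub>R (z - a))"
      by blast
    define h where "h = min (d / 2) (1 / 2)"
    have "0 < h" "h < d" "h \<le> 1" using \<open>d > 0\<close> by (auto simp: h_def)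
    have "(1 - h) *\<^sub>R a + h *\<^sub>R z \<in> K"
      using \<open>a \<in> K\<close> \<open>z \<in> K\<close> \<open>0 < h\<close> \<open>h \<le> 1\<close> by (intro convexD[OF body_convex]) auto
    then have "F (a + h *\<^sub>R (z - a)) \<le> 0" by (simp add: body_eq algebra_simps)
    moreover have "F a = 0" using a frontier_eq by blast
    ultimately show False using d[OF \<open>0 < h\<close> \<open>h < d\<close>] by simp
  qed
qed

lemma grad_inner_pos: "a \<in> frontier K \<Longrightarrow> grad a \<bullet> a > 0"
  using support_point_pos[OF zero_in_interior grad_nonzero support_point_grad] .

lemma shrunk_line_in_body_right:
  assumes a: "a \<in> frontier K" and gw: "grad a \<bullet> w = 0" and "\<epsilon> > 0"
  shows "\<exists>d>0. \<forall>t. 0 < t \<and> t < d \<longrightarrow> (1 / (1 + \<epsilon> * t)) *\<^sub>R (a + t *\<^sub>R w) \<in> K"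
proof -
  define \<gamma> where "\<gamma> t = (1 / (1 + \<epsilon> * t)) *\<^sub>R (a + t *\<^sub>R w)" for t
  have "((\<lambda>t. F (\<gamma> t)) has_real_derivative (\<lambda>v. grad a \<bullet> v) (w - \<epsilon> *\<^sub>R a)) (at 0)"
    unfolding \<gamma>_def
    by (rule has_field_derivative_along_curve[OF has_vector_derivative_shrunk_line])
      (simp add: F_has_derivative)
  moreover have "(\<lambda>v. grad a \<bullet> v) (w - \<epsilon> *\<^sub>R a) < 0"
    using gw grad_inner_pos[OF a] \<open>\<epsilon> > 0\<close> by (simp add: inner_diff_right)
  ultimately obtain d where "d > 0" and d: "\<forall>h>0. h < d \<longrightarrow> F (\<gamma> 0) > F (\<gamma> (0 + h))"
    by (blast dest: DERIV_neg_dec_right)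
  moreover have "F (\<gamma> 0) = 0" using a frontier_eq by (simp add: \<gamma>_def)
  ultimately have "\<forall>t. 0 < t \<and> t < d \<longrightarrow> \<gamma> t \<in> K" by (auto simp: body_eq less_imp_le)
  then show ?thesis using \<open>d > 0\<close> unfolding \<gamma>_def by blast
qed

lemma flat_along_grad_kernel:
  assumes a: "a \<in> frontier K" and gw: "grad a \<bullet> w = 0"
  shows "flat_along K a w"
  unfolding flat_along_def
proof (intro allI impI)
  fix \<epsilon> :: real assume "\<epsilon> > 0"
  obtain d1 where "d1 > 0"
    and d1: "\<And>t. 0 < t \<Longrightarrow> t < d1 \<Longrightarrow> (1 / (1 + \<epsilon> * t)) *\<^sub>R (a + t *\<^sub>R w) \<in> K"
    using shrunk_line_in_body_right[OF a gw \<open>\<epsilon> > 0\<close>] by blast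
  obtain d2 where "d2 > 0"
    and d2: "\<And>t. 0 < t \<Longrightarrow> t < d2 \<Longrightarrow> (1 / (1 + \<epsilon> * t)) *\<^sub>R (a + t *\<^sub>R - w) \<in> K"
    using shrunk_line_in_body_right[OF a _ \<open>\<epsilon> > 0\<close>, of "- w"] gw by auto
  show "eventually (\<lambda>t. (1 / (1 + \<epsilon> * \<bar>t\<bar>)) *\<^sub>R (a + t *\<^sub>R w) \<in> K) (at 0)"
    unfolding eventually_at
  proof (intro exI[of _ "min d1 d2"] conjI ballI impI)
    show "min d1 d2 > 0" using \<open>d1 > 0\<close> \<open>d2 > 0\<close> by simp
    fix t :: real assume "t \<noteq> 0 \<and> dist t 0 < min d1 d2"
    then consider "0 < t" "t < d1" | "0 < - t" "- t < d2" by (cases "t > 0") auto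
    then show "(1 / (1 + \<epsilon> * \<bar>t\<bar>)) *\<^sub>R (a + t *\<^sub>R w) \<in> K"
    proof cases
      case 1
      then show ?thesis using d1 by simp
    next
      case 2
      then show ?thesis using d2[of "- t"] by simp
    qed
  qed
qed

lemma supporting_functional_parallel_grad:
  assumes "l \<noteq> 0" and l: "support_point K l a"
  shows "l = ((l \<bullet> grad a) / (grad a \<bullet> grad a)) *\<^sub>R grad a"
proof (rule orthogonal_complement_parallel)
  have a: "a \<in> frontier K" using support_point_frontier[OF assms] .
  then show "grad a \<noteq> 0" by (rule grad_nonzero)
  fix w assume gw: "grad a \<bullet> w = 0"
  have "w \<in> tangent_space (frontier K) a"
    using tangent_space_if_flat_along[OF grad_nonzero[OF a] support_point_grad[OF a] gw
        flat_along_grad_kernel[OF a gw]] .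
  then show "l \<bullet> w = 0" by (rule tangent_space_subset_kernel[OF body_closed l])
qed

sublocale smooth_convex_body K
proof
  fix l p w assume l: "l \<noteq> 0" "support_point K l p" and "l \<bullet> w = 0"
  define c where "c = (l \<bullet> grad p) / (grad p \<bullet> grad p)"
  have "l = c *\<^sub>R grad p" unfolding c_def by (rule supporting_functional_parallel_grad[OF l])
  with l(1) \<open>l \<bullet> w = 0\<close> have "grad p \<bullet> w = 0" by auto
  then show "flat_along K p w"
    using flat_along_grad_kernel support_point_frontier[OF l] by blast
qed

text \<open>Two maximisers would span a segment of the frontier on which \<open>F\<close> vanishes, so the
  second derivative of \<open>F\<close> in the direction of the segment would vanish.\<close>
lemma support_point_unique:
  assumes "u \<noteq> 0" and a1: "support_point K u a1" and a2: "support_point K u a2"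
  shows "a1 = a2"
proof (rule ccontr)
  assume "a1 \<noteq> a2"
  define v where "v = a2 - a1"
  have "v \<noteq> 0" using \<open>a1 \<noteq> a2\<close> by (simp add: v_def)
  have segment: "a1 + s *\<^sub>R v \<in> frontier K" if "0 < s" "s < 1" for s
    using support_points_segment_frontier[OF assms] that by (simp add: v_def)
  have grad_v: "grad (a1 + s *\<^sub>R v) \<bullet> v = 0" if "0 < s" "s < 1" for s
  proof (rule has_real_derivative_vanishing_on_unit_interval[OF _ that])
    show "((\<lambda>r. F (a1 + r *\<^sub>R v)) has_real_derivative grad (a1 + s *\<^sub>R v) \<bullet> v) (at s)"
      using has_field_derivative_along_curve[OF has_vector_derivative_line F_has_derivative] .
    show "F (a1 + y *\<^sub>R v) = 0" if "0 < y" "y < 1" for y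
      using segment[OF that] frontier_eq by blast
  qed
  define m where "m = a1 + (1 / 2) *\<^sub>R v"
  define \<psi> where "\<psi> = (\<lambda>y. frechet_derivative F (at y) v)"
  have "\<psi> differentiable (at m)"
    using smooth_funD(1)[OF smooth_funD(2)[OF smooth]] by (simp add: \<psi>_def)
  then have "((\<lambda>r. \<psi> (a1 + r *\<^sub>R v)) has_real_derivative frechet_derivative \<psi> (at m) v) (at (1 / 2))"
    using has_field_derivative_along_curve[OF has_vector_derivative_line
        frechet_derivative_works[THEN iffD1]]
    by (simp add: m_def)
  then have "frechet_derivative \<psi> (at m) v = 0"
    by (rule has_real_derivative_vanishing_on_unit_interval)
      (auto simp: \<psi>_def frechet_derivative_eq_grad grad_v)
  moreover have "D2 F m v v > 0"
    using hessian_pos[OF segment \<open>v \<noteq> 0\<close>, of "1 / 2"] grad_v[of "1 / 2"]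
    by (simp add: m_def frechet_derivative_eq_grad)
  ultimately show False by (simp add: D2_def \<psi>_def)
qed

end

lemma qconvex_body_defining_function:
  assumes "qconvex_body K"
  obtains F where "qconvex_defining_function K F"
  using assms unfolding qconvex_body_def qconvex_defining_function_def
    qconvex_defining_function_axioms_def convex_body_def by blast

lemma n_minus_eq_n_plus_uminus: "n_minus M x = n_plus M (- x)"
  by (simp add: n_minus_def n_plus_def)

lemma n_plus_qconvex_body:
  fixes K :: "'d::finite phase set"
  assumes "qconvex_defining_function K F" and "x \<noteq> 0" and p: "support_point K (- Jmap x) p"
  shows "n_plus (frontier K) x = p"
proof -
  interpret qconvex_defining_function K F by (rule assms(1))
  have "b = p" if "support_point K (- Jmap x) b" for b
    using support_point_unique[OF _ that p] assms(2) by simp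
  then show ?thesis
    using n_plus_smooth_convex_body(1)[OF smooth_convex_body_axioms assms(2) p] by blast
qed

lemma n_plus_sym_body:
  fixes K :: "'d::finite phase set"
  assumes "qconvex_defining_function K F" and "x \<noteq> 0"
    and p: "support_point K (- Jmap x) p" and q: "support_point K (Jmap x) q"
  shows "n_plus (frontier (sym_body K)) x = p - q"
    and "pos_prop (Rvec (frontier (sym_body K)) (p - q)) x"
proof -
  interpret qconvex_defining_function K F by (rule assms(1))
  have q_neg: "support_point K (- (- Jmap x)) q" using q by simp
  have pq: "support_point (sym_body K) (- Jmap x) (p - q)"
    unfolding support_point_sym_body_iff using p q_neg by blast
  have unique: "b = p - q" if b_sup: "support_point (sym_body K) (- Jmap x) b" for b
  proof -
    obtain p' q' where b: "b = p' - q'" and p': "support_point K (- Jmap x) p'"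
      and q': "support_point K (- (- Jmap x)) q'"
      using b_sup unfolding support_point_sym_body_iff by blast
    have "p' = p" using support_point_unique[OF _ p' p] assms(2) by simp
    moreover have "q' = q" using support_point_unique[OF _ q' q_neg] assms(2) by simp
    ultimately show ?thesis using b by simp
  qed
  show "n_plus (frontier (sym_body K)) x = p - q"
    and "pos_prop (Rvec (frontier (sym_body K)) (p - q)) x"
    using n_plus_smooth_convex_body[OF smooth_convex_body_sym_body assms(2) pq unique] by simp_all
qed

theorem lemma2p9:
  fixes K M :: "'d::finite phase set" and x :: "'d phase"
  assumes "qconvex_body K"
    and "M = frontier K"
    and "x \<in> outside (frontier (sym_body K))"
  shows "n_plus (frontier (sym_body K)) x = n_plus M x - n_minus M x
       \<and> n_plus M x - n_minus M x = - n_minus (frontier (sym_body K)) x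
       \<and> pos_prop (Rvec (frontier (sym_body K)) (n_plus M x - n_minus M x)) x
       \<and> pos_prop (Rvec (frontier (sym_body K)) (n_minus M x - n_plus M x)) (- x)"
proof -
  obtain F where F: "qconvex_defining_function K F"
    using qconvex_body_defining_function[OF assms(1)] .
  interpret qconvex_defining_function K F by (rule F)
  interpret sym: convex_body "sym_body K" by (rule convex_body_sym_body)
  have "x \<noteq> 0" by (rule sym.nonzero_if_outside_frontier[OF assms(3)])
  have "K \<noteq> {}" using zero_in_body by blast
  obtain p where p: "support_point K (- Jmap x) p"
    using support_point_exists[OF body_compact \<open>K \<noteq> {}\<close>] .
  obtain q where q: "support_point K (Jmap x) q"
    using support_point_exists[OF body_compact \<open>K \<noteq> {}\<close>] .
  have "- x \<noteq> 0" and "support_point K (- Jmap (- x)) q" and "support_point K (Jmap (- x)) p"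
    using \<open>x \<noteq> 0\<close> p q by simp_all
  note minus_x = this
  have "n_plus M x = p" "n_minus M x = q"
    using n_plus_qconvex_body[OF F \<open>x \<noteq> 0\<close> p] n_plus_qconvex_body[OF F minus_x(1,2)]
    by (simp_all add: assms(2) n_minus_eq_n_plus_uminus)
  moreover have "n_plus (frontier (sym_body K)) x = p - q"
    "pos_prop (Rvec (frontier (sym_body K)) (p - q)) x"
    using n_plus_sym_body[OF F \<open>x \<noteq> 0\<close> p q] by simp_all
  moreover have "n_minus (frontier (sym_body K)) x = q - p"
    "pos_prop (Rvec (frontier (sym_body K)) (q - p)) (- x)"
    using n_plus_sym_body[OF F minus_x] by (simp_all add: n_minus_eq_n_plus_uminus)
  ultimately show ?thesis by simp
qed

end
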